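(* Let $G$ be a finite group whose prime graph $\Pi(G)$ has no edges, i.e. $G$ contains no element whose order is a product of two distinct primes. Then $P(G)$ is a cograph.
   Context: The prime graph (Gruenberg--Kegel graph) $\Pi(G)$ of a finite group $G$ has as vertices the prime divisors of $|G|$, with distinct primes $p,q$ adjacent if and only if $G$ contains an element of order $pq$. The power graph $P(G)$ has vertex set $G$, with distinct $u,v$ adjacent if and only if $u=v^i$ or $v=u^j$ for some integers $i,j$. A cograph is a graph with no induced subgraph isomorphic to the path $P_4$ on four vertices. *)

theory Defs
  imports "HOL-Algebra.Algebra" "HOL-Computational_Algebra.Primes"
begin

definition prime_graph_adj :: "('a, 'b) monoid_scheme \<Rightarrow> nat \<Rightarrow> nat \<Rightarrow> bool" where
  "prime_graph_adj G p q \<longleftrightarrow>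
     Factorial_Ring.prime p \<and> Factorial_Ring.prime q \<and> p \<noteq> q \<and> p dvd order G \<and> q dvd order G \<and>
     (\<exists>x\<in>carrier G. group.ord G x = p * q)"

definition power_graph_adj :: "('a, 'b) monoid_scheme \<Rightarrow> 'a \<Rightarrow> 'a \<Rightarrow> bool" where
  "power_graph_adj G u v \<longleftrightarrow>
     u \<in> carrier G \<and> v \<in> carrier G \<and> u \<noteq> v \<and>
     ((\<exists>i::int. u = v [^]\<^bsub>G\<^esub> i) \<or> (\<exists>j::int. v = u [^]\<^bsub>G\<^esub> j))"

definition cograph :: "'v set \<Rightarrow> ('v \<Rightarrow> 'v \<Rightarrow> bool) \<Rightarrow> bool" where
  "cograph V E \<longleftrightarrow>
     \<not> (\<exists>a\<in>V. \<exists>b\<in>V. \<exists>c\<in>V. \<exists>d\<in>V.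
          distinct [a, b, c, d] \<and>
          E a b \<and> E b c \<and> E c d \<and>
          \<not> E a c \<and> \<not> E b d \<and> \<not> E a d)"

end

theory Submission
  imports Defs
begin

text \<open>If no element has order \<open>p q\<close> for distinct primes, every element has prime-power order,
  so the powers of any element form a cyclic \<open>p\<close>-group and are totally ordered by
  ``is a power of''. The power graph is the comparability graph of this preorder. In an induced
  path \<open>a - b - c - d\<close> the non-edge \<open>a, c\<close> forces \<open>b\<close> to be a power of both \<open>a\<close> and \<open>c\<close>
  (otherwise \<open>a\<close> and \<open>c\<close> would be comparable by transitivity or by the chain property below \<open>b\<close>),
  and symmetrically \<open>c\<close> is a power of \<open>b\<close>; but then \<open>c\<close> is a power of \<open>a\<close>.\<close>

lemma cograph_comparability_graph:
  assumes trans: "\<And>u v w. \<lbrakk>u \<in> V; v \<in> V; w \<in> V; R u v; R v w\<rbrakk> \<Longrightarrow> R u w"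
    and chain_below: "\<And>a b c. \<lbrakk>a \<in> V; b \<in> V; c \<in> V; R a b; R c b\<rbrakk> \<Longrightarrow> R a c \<or> R c a"
  shows "cograph V (\<lambda>u v. u \<in> V \<and> v \<in> V \<and> u \<noteq> v \<and> (R u v \<or> R v u))"
  unfolding cograph_def
proof (intro notI)
  assume "\<exists>a\<in>V. \<exists>b\<in>V. \<exists>c\<in>V. \<exists>d\<in>V. distinct [a, b, c, d] \<and>
    (a \<in> V \<and> b \<in> V \<and> a \<noteq> b \<and> (R a b \<or> R b a)) \<and>
    (b \<in> V \<and> c \<in> V \<and> b \<noteq> c \<and> (R b c \<or> R c b)) \<and>
    (c \<in> V \<and> d \<in> V \<and> c \<noteq> d \<and> (R c d \<or> R d c)) \<and>
    \<not> (a \<in> V \<and> c \<in> V \<and> a \<noteq> c \<and> (R a c \<or> R c a)) \<and>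
    \<not> (b \<in> V \<and> d \<in> V \<and> b \<noteq> d \<and> (R b d \<or> R d b)) \<and>
    \<not> (a \<in> V \<and> d \<in> V \<and> a \<noteq> d \<and> (R a d \<or> R d a))"
  then obtain a b c d where V: "a \<in> V" "b \<in> V" "c \<in> V" "d \<in> V"
    and ab: "R a b \<or> R b a" and bc: "R b c \<or> R c b" and cd: "R c d \<or> R d c"
    and ac: "\<not> R a c" "\<not> R c a" and bd: "\<not> R b d" "\<not> R d b"
    by auto
  have "R b a" and "R b c"
    using ab bc ac trans[of a b c] trans[of c b a] chain_below[of a b c] V by blast+
  moreover have "R c b"
    using bc cd bd trans[of b c d] trans[of d c b] chain_below[of b c d] V by blast
  ultimately show False
    using trans[of c b a] ac V by blast
qed

lemma prime_power_if_unique_prime_divisor: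
  fixes n :: nat
  assumes "n > 0"
    and unique: "\<And>p q. \<lbrakk>Factorial_Ring.prime p; Factorial_Ring.prime q; p dvd n; q dvd n\<rbrakk> \<Longrightarrow> p = q"
  shows "\<exists>p k. Factorial_Ring.prime p \<and> n = p ^ k"
proof (cases "n = 1")
  case True
  then show ?thesis by (intro exI[of _ 2] exI[of _ 0]) simp
next
  case False
  obtain p where p: "Factorial_Ring.prime p" "p dvd n" using prime_factor_nat[OF False] by blast
  obtain m where m: "n = p ^ multiplicity p n * m" "\<not> p dvd m"
    by (rule multiplicity_decompose'[of n p]) (use assms(1) p in \<open>auto simp: prime_def\<close>)
  have "m = 1"
  proof (rule ccontr)
    assume "m \<noteq> 1"
    then obtain q where "Factorial_Ring.prime q" "q dvd m" using prime_factor_nat by blast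
    moreover have "q dvd n" using \<open>q dvd m\<close> m(1) by (metis dvd_mult)
    ultimately show False using unique[OF p(1) _ p(2)] m(2) by blast
  qed
  then show ?thesis using m(1) p(1) by auto
qed

lemma dvd_prime_power_linear:
  fixes p :: nat
  assumes "Factorial_Ring.prime p" "g dvd p ^ n" "h dvd p ^ n"
  shows "g dvd h \<or> h dvd g"
proof -
  obtain r s where "g = p ^ r" "h = p ^ s"
    using assms divides_primepow_nat by metis
  then show ?thesis
    by (cases "r \<le> s") (simp_all add: le_imp_power_dvd)
qed

definition power_of :: "('a, 'b) monoid_scheme \<Rightarrow> 'a \<Rightarrow> 'a \<Rightarrow> bool" where
  "power_of G u v \<longleftrightarrow> (\<exists>i::int. u = v [^]\<^bsub>G\<^esub> i)"

lemma power_graph_adj_iff_power_of: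
  "power_graph_adj G u v \<longleftrightarrow>
     u \<in> carrier G \<and> v \<in> carrier G \<and> u \<noteq> v \<and> (power_of G u v \<or> power_of G v u)"
  unfolding power_graph_adj_def power_of_def by simp

context group
begin

lemma power_of_trans:
  assumes "w \<in> carrier G" "power_of G u v" "power_of G v w"
  shows "power_of G u w"
proof -
  obtain i j :: int where "v = w [^] i" "u = v [^] j"
    using assms(2,3) unfolding power_of_def by blast
  then have "u = w [^] (i * j)" using assms(1) by (simp add: int_pow_pow)
  then show ?thesis unfolding power_of_def by blast
qed

lemma power_of_pow_pow_dvd:
  assumes "b \<in> carrier G" "g dvd h"
  shows "power_of G (b [^] h) (b [^] (g::int))"
proof -
  obtain t where "h = g * t" using assms(2) by blast
  then have "b [^] h = (b [^] g) [^] t" using assms(1) by (simp add: int_pow_pow)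
  then show ?thesis unfolding power_of_def by blast
qed

text \<open>Bezout: \<open>gcd i (ord b) = u i + v ord b\<close>, and \<open>b [^] ord b = \<one>\<close>.\<close>
lemma power_of_pow_gcd_ord:
  assumes b: "b \<in> carrier G"
  shows "power_of G (b [^] gcd i (int (ord b))) (b [^] (i::int))"
proof -
  obtain u v where uv: "u * i + v * int (ord b) = gcd i (int (ord b))"
    using bezout_int by blast
  have "i * u - gcd i (int (ord b)) = int (ord b) * (- v)"
    using uv by (simp add: algebra_simps)
  then have "int (ord b) dvd i * u - gcd i (int (ord b))"
    by (metis dvd_triv_left)
  then have "b [^] gcd i (int (ord b)) = b [^] (i * u)"
    using int_pow_eq[OF b] by simp
  also have "\<dots> = (b [^] i) [^] u"
    using b by (simp add: int_pow_pow)
  finally show ?thesis unfolding power_of_def by blast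
qed

lemma powers_of_prime_power_order_chain:
  assumes b: "b \<in> carrier G" and p: "Factorial_Ring.prime p" and ord_b: "ord b = p ^ n"
    and "power_of G a b" "power_of G c b"
  shows "power_of G a c \<or> power_of G c a"
proof -
  obtain i j :: int where a: "a = b [^] i" and c: "c = b [^] j"
    using assms(4,5) unfolding power_of_def by blast
  define g where "g = gcd i (int (ord b))"
  define h where "h = gcd j (int (ord b))"
  have a_g: "power_of G a (b [^] g)" and g_a: "power_of G (b [^] g) a"
    using a b power_of_pow_pow_dvd[of b g i] power_of_pow_gcd_ord[of b i] by (simp_all add: g_def)
  have c_h: "power_of G c (b [^] h)" and h_c: "power_of G (b [^] h) c"
    using c b power_of_pow_pow_dvd[of b h j] power_of_pow_gcd_ord[of b j] by (simp_all add: h_def)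
  have g_nat: "g = int (nat g)" and h_nat: "h = int (nat h)"
    by (simp_all add: g_def h_def)
  have "g dvd int (p ^ n)" "h dvd int (p ^ n)"
    unfolding g_def h_def ord_b[symmetric] by simp_all
  then have "nat g dvd p ^ n" "nat h dvd p ^ n"
    using g_nat h_nat by (metis of_nat_dvd_iff)+
  then have "nat g dvd nat h \<or> nat h dvd nat g"
    using dvd_prime_power_linear[OF p] by blast
  then have "g dvd h \<or> h dvd g"
    using g_nat h_nat by (metis of_nat_dvd_iff)
  then show ?thesis
  proof
    assume "g dvd h"
    then have "power_of G (b [^] h) (b [^] g)" using b power_of_pow_pow_dvd by blast
    then have "power_of G c (b [^] g)" using power_of_trans[OF _ c_h] b by simp
    then show ?thesis using power_of_trans[OF _ _ g_a] a b by simp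
  next
    assume "h dvd g"
    then have "power_of G (b [^] g) (b [^] h)" using b power_of_pow_pow_dvd by blast
    then have "power_of G a (b [^] h)" using power_of_trans[OF _ a_g] b by simp
    then show ?thesis using power_of_trans[OF _ _ h_c] b c by simp
  qed
qed

lemma exists_ord_mult_primes:
  assumes x: "x \<in> carrier G" and "ord x > 0"
    and "Factorial_Ring.prime p" "Factorial_Ring.prime q" "p \<noteq> q" "p dvd ord x" "q dvd ord x"
  shows "\<exists>y \<in> carrier G. ord y = p * q"
proof -
  have "p * q dvd ord x"
    using assms(3-7) by (simp add: divides_mult primes_coprime)
  then obtain m where m: "ord x = p * q * m" by blast
  then have "m \<noteq> 0" using assms(2) by auto
  then have "ord (x [^] m) = p * q"
    using ord_pow[OF x, of m] m by simp
  then show ?thesis using x by blast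
qed

lemma ord_prime_power:
  assumes fin: "finite (carrier G)" and x: "x \<in> carrier G"
    and no_pq: "\<And>y p q. \<lbrakk>y \<in> carrier G; Factorial_Ring.prime p; Factorial_Ring.prime q; p \<noteq> q\<rbrakk>
                  \<Longrightarrow> ord y \<noteq> p * q"
  shows "\<exists>p n. Factorial_Ring.prime p \<and> ord x = p ^ n"
proof -
  have pos: "ord x > 0" using ord_ge_1[OF fin x] by simp
  have "p = q" if pq: "Factorial_Ring.prime p" "Factorial_Ring.prime q" "p dvd ord x" "q dvd ord x"
    for p q
  proof (rule ccontr)
    assume "p \<noteq> q"
    then obtain y where "y \<in> carrier G" "ord y = p * q"
      using exists_ord_mult_primes[OF x pos pq(1,2) _ pq(3,4)] by blast
    then show False using no_pq pq(1,2) \<open>p \<noteq> q\<close> by blast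
  qed
  then show ?thesis
    using prime_power_if_unique_prime_divisor[OF pos] by blast
qed

end

theorem mainTheorem6:
  fixes G :: "('a, 'b) monoid_scheme"
  assumes "group G"
    and "finite (carrier G)"
    and "\<forall>p q. \<not> prime_graph_adj G p q"
  shows "cograph (carrier G) (power_graph_adj G)"
proof -
  interpret group G by fact
  have no_pq: "ord y \<noteq> p * q"
    if "y \<in> carrier G" "Factorial_Ring.prime p" "Factorial_Ring.prime q" "p \<noteq> q" for y p q
  proof
    assume "ord y = p * q"
    then have "p dvd order G" "q dvd order G"
      using ord_dvd_group_order[OF \<open>y \<in> carrier G\<close>] by (auto intro: dvd_trans)
    then show False
      using assms(3) that \<open>ord y = p * q\<close> unfolding prime_graph_adj_def by blast
  qed
  have "cograph (carrier G)
          (\<lambda>u v. u \<in> carrier G \<and> v \<in> carrier G \<and> u \<noteq> v \<and> (power_of G u v \<or> power_of G v u))"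
  proof (rule cograph_comparability_graph)
    show "power_of G a c \<or> power_of G c a"
      if "b \<in> carrier G" "power_of G a b" "power_of G c b" for a b c
      using ord_prime_power[OF assms(2) \<open>b \<in> carrier G\<close> no_pq] powers_of_prime_power_order_chain that
      by blast
  qed (rule power_of_trans)
  then show ?thesis
    unfolding power_graph_adj_iff_power_of[abs_def] .
qed

end
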